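(* Let $\Lambda,\Gamma$ be finite simplicial graphs with complement graphs $\Lambda^c,\Gamma^c$, and suppose there is a surjective and locally surjective graph morphism $\Lambda^c\to\Gamma^c$. Then $C(\Gamma)$ is quasi-isometrically embedded in $C(\Lambda)$ (i.e. there is an injective homomorphism $C(\Gamma)\hookrightarrow C(\Lambda)$ which is a quasi-isometric embedding for the word metrics of the vertex generating sets).
   Context: The complement graph $\Gamma^c$ has vertex set $V(\Gamma)$, with two distinct vertices adjacent in $\Gamma^c$ iff they are not adjacent in $\Gamma$. A graph morphism $g\colon X\to Y$ is a map $V(X)\to V(Y)$ sending each pair of adjacent vertices to a pair of adjacent vertices. It is locally surjective if for every vertex $v$ of $X$ and every edge $e$ of $Y$ incident to $g(v)$ there is an edge $\tilde e$ of $X$ incident to $v$ with $g(\tilde e)=e$. The right-angled Coxeter group is $C(\Gamma)=\langle V(\Gamma)\mid v^2=1,\ [u,v]=1\text{ iff }\{u,v\}\in E(\Gamma)\rangle$. *)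

theory Defs
  imports Complex_Main "HOL-Algebra.Group"
begin

type_synonym 'a graph = "'a set \<times> 'a set set"

definition verts :: "'a graph \<Rightarrow> 'a set" where "verts G = fst G"
definition edges :: "'a graph \<Rightarrow> 'a set set" where "edges G = snd G"

definition finite_simple_graph :: "'a graph \<Rightarrow> bool" where
  "finite_simple_graph G \<longleftrightarrow> finite (verts G) \<and>
     edges G \<subseteq> {{u, v} | u v. u \<in> verts G \<and> v \<in> verts G \<and> u \<noteq> v}"

definition complement_graph :: "'a graph \<Rightarrow> 'a graph" where
  "complement_graph G = (verts G,
     {{u, v} | u v. u \<in> verts G \<and> v \<in> verts G \<and> u \<noteq> v \<and> {u, v} \<notin> edges G})"

definition graph_morphism :: "('a \<Rightarrow> 'b) \<Rightarrow> 'a graph \<Rightarrow> 'b graph \<Rightarrow> bool" where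
  "graph_morphism g X Y \<longleftrightarrow> g ` verts X \<subseteq> verts Y \<and> (\<forall>e \<in> edges X. g ` e \<in> edges Y)"

definition locally_surjective :: "('a \<Rightarrow> 'b) \<Rightarrow> 'a graph \<Rightarrow> 'b graph \<Rightarrow> bool" where
  "locally_surjective g X Y \<longleftrightarrow>
     (\<forall>v \<in> verts X. \<forall>e \<in> edges Y. g v \<in> e \<longrightarrow> (\<exists>e' \<in> edges X. v \<in> e' \<and> g ` e' = e))"

inductive racg_eq :: "'a graph \<Rightarrow> 'a list \<Rightarrow> 'a list \<Rightarrow> bool" for G where
  refl: "set w \<subseteq> verts G \<Longrightarrow> racg_eq G w w"
| sym: "racg_eq G w w' \<Longrightarrow> racg_eq G w' w"
| trans: "racg_eq G w w' \<Longrightarrow> racg_eq G w' w'' \<Longrightarrow> racg_eq G w w''"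
| cancel: "set xs \<subseteq> verts G \<Longrightarrow> set ys \<subseteq> verts G \<Longrightarrow> v \<in> verts G \<Longrightarrow>
     racg_eq G (xs @ [v, v] @ ys) (xs @ ys)"
| commute: "set xs \<subseteq> verts G \<Longrightarrow> set ys \<subseteq> verts G \<Longrightarrow> {u, v} \<in> edges G \<Longrightarrow>
     racg_eq G (xs @ [u, v] @ ys) (xs @ [v, u] @ ys)"

definition racg_class :: "'a graph \<Rightarrow> 'a list \<Rightarrow> 'a list set" where
  "racg_class G w = {w'. racg_eq G w w'}"

definition RACG :: "'a graph \<Rightarrow> 'a list set monoid" where
  "RACG G = \<lparr> carrier = racg_class G ` {w. set w \<subseteq> verts G},
              mult = (\<lambda>X Y. racg_class G ((SOME x. x \<in> X) @ (SOME y. y \<in> Y))),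
              one = racg_class G [] \<rparr>"

definition word_dist :: "'a graph \<Rightarrow> 'a list set \<Rightarrow> 'a list set \<Rightarrow> nat" where
  "word_dist G g h = (LEAST n. \<exists>w. set w \<subseteq> verts G \<and> length w = n \<and>
                                   g \<otimes>\<^bsub>RACG G\<^esub> racg_class G w = h)"

definition qi_embedding :: "'a graph \<Rightarrow> 'b graph \<Rightarrow> ('a list set \<Rightarrow> 'b list set) \<Rightarrow> bool" where
  "qi_embedding G L f \<longleftrightarrow> (\<exists>K C :: real. K \<ge> 1 \<and> C \<ge> 0 \<and>
     (\<forall>g \<in> carrier (RACG G). \<forall>h \<in> carrier (RACG G).
        real (word_dist G g h) / K - C \<le> real (word_dist L (f g) (f h)) \<and>
        real (word_dist L (f g) (f h)) \<le> K * real (word_dist G g h) + C))"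

end

theory Submission
  imports Defs
begin

(* Every fibre g^-1(v) is a clique of Lambda: two non-adjacent vertices of one fibre would
   span an edge of Lambda^c mapped to a loop. Likewise the fibres over adjacent vertices of
   Gamma are completely joined in Lambda. So replacing each generator v by the product of its
   fibre respects the defining relations and yields a homomorphism C(Gamma) -> C(Lambda).
   Call a word reduced if no letter can be shuffled, by commutations, onto an earlier copy of
   itself. Tits' solution of the word problem, proved here through the right action of the
   generators on reduced words, says that reduced words are geodesic. Local surjectivity
   makes the substitution preserve reduced words and surjectivity makes it non-shortening,
   so word distances are stretched by a factor between 1 and |V(Lambda)|; this gives both
   injectivity and the quasi-isometric embedding. *)

section \<open>Commutation and reduced words\<close>

definition adjacent :: "'a graph \<Rightarrow> 'a \<Rightarrow> 'a \<Rightarrow> bool" where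
  "adjacent G a b \<longleftrightarrow> {a, b} \<in> edges G \<and> a \<noteq> b"

lemma adjacent_sym: "adjacent G a b \<Longrightarrow> adjacent G b a"
  by (auto simp: adjacent_def insert_commute)

definition commutes :: "'a graph \<Rightarrow> 'a \<Rightarrow> 'a list \<Rightarrow> bool" where
  "commutes G s q \<longleftrightarrow> (\<forall>c \<in> set q. adjacent G s c)"

lemma commutes_simps [simp]:
  "commutes G s []"
  "commutes G s (c # q) \<longleftrightarrow> adjacent G s c \<and> commutes G s q"
  "commutes G s (p @ q) \<longleftrightarrow> commutes G s p \<and> commutes G s q"
  by (auto simp: commutes_def)

lemma commutes_not_in: "commutes G s q \<Longrightarrow> s \<notin> set q"
  by (auto simp: commutes_def adjacent_def)

definition movable_to_end :: "'a graph \<Rightarrow> 'a \<Rightarrow> 'a list \<Rightarrow> bool" where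
  "movable_to_end G s w \<longleftrightarrow> (\<exists>p q. w = p @ s # q \<and> commutes G s q)"

lemma movable_to_endI: "commutes G s q \<Longrightarrow> movable_to_end G s (p @ s # q)"
  unfolding movable_to_end_def by blast

lemma movable_to_endE:
  assumes "movable_to_end G s w"
  obtains p q where "w = p @ s # q" "commutes G s q"
  using assms unfolding movable_to_end_def by blast

lemma not_movable_to_end_Nil [simp]: "\<not> movable_to_end G s []"
  by (simp add: movable_to_end_def)

lemma movable_to_end_snoc [simp]:
  "movable_to_end G s (w @ [c]) \<longleftrightarrow> c = s \<or> adjacent G s c \<and> movable_to_end G s w"
proof
  assume "movable_to_end G s (w @ [c])"
  then obtain p q where pq: "w @ [c] = p @ s # q" "commutes G s q"
    by (rule movable_to_endE)
  show "c = s \<or> adjacent G s c \<and> movable_to_end G s w"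
  proof (cases q rule: rev_cases)
    case Nil
    then show ?thesis using pq by simp
  next
    case (snoc q' c')
    then have "w = p @ s # q'" "c' = c" using pq(1) by auto
    then show ?thesis using pq(2) snoc movable_to_endI[of G s q' p] by simp
  qed
next
  assume "c = s \<or> adjacent G s c \<and> movable_to_end G s w"
  then show "movable_to_end G s (w @ [c])"
  proof
    assume "c = s"
    then show ?thesis using movable_to_endI[of G s "[]" w] by simp
  next
    assume "adjacent G s c \<and> movable_to_end G s w"
    then obtain p q where "w = p @ s # q" "commutes G s (q @ [c])"
      by (auto elim: movable_to_endE)
    then show ?thesis using movable_to_endI[of G s "q @ [c]" p] by simp
  qed
qed

lemma movable_to_end_append:
  "movable_to_end G s (p @ q) \<longleftrightarrow> movable_to_end G s q \<or> commutes G s q \<and> movable_to_end G s p"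
proof (induction q rule: rev_induct)
  case Nil
  then show ?case by simp
next
  case (snoc c q)
  then show ?case using movable_to_end_snoc[of G s "p @ q" c] by auto
qed

lemma movable_to_end_Cons [simp]:
  "movable_to_end G s (c # w) \<longleftrightarrow> movable_to_end G s w \<or> commutes G s w \<and> c = s"
  using movable_to_end_append[of G s "[c]" w] movable_to_end_snoc[of G s "[]" c] by auto

lemma movable_to_end_in: "movable_to_end G s w \<Longrightarrow> s \<in> set w"
  by (auto elim: movable_to_endE)

inductive reduced :: "'a graph \<Rightarrow> 'a list \<Rightarrow> bool" for G where
  Nil: "reduced G []"
| snoc: "reduced G w \<Longrightarrow> \<not> movable_to_end G s w \<Longrightarrow> reduced G (w @ [s])"

lemma reduced_snoc_iff [simp]: "reduced G (w @ [s]) \<longleftrightarrow> reduced G w \<and> \<not> movable_to_end G s w"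
  by (auto elim: reduced.cases intro: reduced.snoc)

lemma reduced_prefix: "reduced G (w @ r) \<Longrightarrow> reduced G w"
  by (induction r rule: rev_induct) (simp_all flip: append_assoc)

lemma reduced_delete:
  "reduced G (p @ s # q) \<Longrightarrow> commutes G s q \<Longrightarrow> reduced G (p @ q)"
proof (induction q rule: rev_induct)
  case Nil
  then show ?case using reduced_prefix[of G p "[s]"] by simp
next
  case (snoc c q)
  from snoc.prems have "reduced G (p @ s # q)" "\<not> movable_to_end G c (p @ s # q)"
    "commutes G s q" "adjacent G c s"
    using reduced_snoc_iff[of G "p @ [s] @ q" c] by (auto simp: adjacent_sym)
  then have "reduced G (p @ q)" "\<not> movable_to_end G c (p @ q)"
    using snoc.IH movable_to_end_append[of G c "p @ [s]" q] movable_to_end_append[of G c p q]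
    by auto
  then show ?case using reduced_snoc_iff[of G "p @ q" c] by simp
qed

lemma reduced_append_distinct:
  assumes "distinct l" "reduced G u" "\<forall>a \<in> set l. \<not> movable_to_end G a u"
  shows "reduced G (u @ l)"
  using assms
proof (induction l rule: rev_induct)
  case (snoc a l)
  then have "\<not> movable_to_end G a (u @ l)"
    using movable_to_end_in by (fastforce simp: movable_to_end_append)
  then show ?case using snoc by (simp flip: append_assoc)
qed simp

definition swap :: "'a graph \<Rightarrow> 'a list \<Rightarrow> 'a list \<Rightarrow> bool" where
  "swap G u u' \<longleftrightarrow> (\<exists>x y a b. adjacent G a b \<and> u = x @ a # b # y \<and> u' = x @ b # a # y)"

abbreviation comm_equiv :: "'a graph \<Rightarrow> 'a list \<Rightarrow> 'a list \<Rightarrow> bool" where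
  "comm_equiv G \<equiv> (swap G)\<^sup>*\<^sup>*"

lemma swapI: "adjacent G a b \<Longrightarrow> swap G (x @ a # b # y) (x @ b # a # y)"
  unfolding swap_def by blast

lemma swapE:
  assumes "swap G u u'"
  obtains x y a b where "adjacent G a b" "u = x @ a # b # y" "u' = x @ b # a # y"
  using assms unfolding swap_def by blast

lemma swap_sym: "swap G u u' \<Longrightarrow> swap G u' u"
  by (elim swapE) (blast intro: swapI adjacent_sym)

lemma comm_equiv_sym: "comm_equiv G u u' \<Longrightarrow> comm_equiv G u' u"
  by (induction rule: rtranclp_induct) (auto intro: converse_rtranclp_into_rtranclp swap_sym)

lemma comm_equiv_append: "comm_equiv G u u' \<Longrightarrow> comm_equiv G (x @ u @ y) (x @ u' @ y)"
proof (induction rule: rtranclp_induct)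
  case base
  then show ?case by simp
next
  case (step u' u'')
  from step.hyps(2) obtain x' y' a b
    where "adjacent G a b" "u' = x' @ a # b # y'" "u'' = x' @ b # a # y'"
    by (rule swapE)
  then have "swap G (x @ u' @ y) (x @ u'' @ y)"
    using swapI[of G a b "x @ x'" "y' @ y"] by simp
  with step.IH show ?case by simp
qed

lemma swap_length: "swap G u u' \<Longrightarrow> length u = length u'"
  by (elim swapE) simp

lemma swap_set: "swap G u u' \<Longrightarrow> set u = set u'"
  by (elim swapE) auto

lemma comm_equiv_length: "comm_equiv G u u' \<Longrightarrow> length u = length u'"
  by (induction rule: rtranclp_induct) (simp_all add: swap_length)

lemma comm_equiv_set: "comm_equiv G u u' \<Longrightarrow> set u = set u'"
  by (induction rule: rtranclp_induct) (simp_all add: swap_set)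

lemma comm_equiv_move_right:
  "commutes G s q \<Longrightarrow> comm_equiv G (p @ s # q @ r) (p @ q @ s # r)"
proof (induction q arbitrary: p)
  case Nil
  then show ?case by simp
next
  case (Cons c q)
  have "swap G (p @ s # c # q @ r) (p @ c # s # q @ r)"
    using Cons.prems by (intro swapI) simp
  moreover have "comm_equiv G (p @ c # s # q @ r) (p @ c # q @ s # r)"
    using Cons.IH[of "p @ [c]"] Cons.prems by simp
  ultimately show ?case by (simp add: converse_rtranclp_into_rtranclp)
qed

lemma comm_equiv_swap_blocks:
  "\<forall>a \<in> set l1. \<forall>b \<in> set l2. adjacent G a b \<Longrightarrow>
    comm_equiv G (x @ l1 @ l2 @ y) (x @ l2 @ l1 @ y)"
proof (induction l1 arbitrary: x)
  case Nil
  then show ?case by simp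
next
  case (Cons a l1)
  have "comm_equiv G (x @ a # l1 @ l2 @ y) (x @ a # l2 @ l1 @ y)"
    using Cons.IH[of "x @ [a]"] Cons.prems by simp
  moreover have "comm_equiv G (x @ a # l2 @ l1 @ y) (x @ l2 @ a # l1 @ y)"
    using Cons.prems by (intro comm_equiv_move_right) (simp add: commutes_def)
  ultimately show ?case by simp
qed

lemma swap_rev: "swap G u u' \<Longrightarrow> swap G (rev u) (rev u')"
  by (elim swapE) (simp add: swapI adjacent_sym)

lemma swap_remove1:
  assumes "swap G u u'"
  shows "remove1 s u = remove1 s u' \<or> swap G (remove1 s u) (remove1 s u')"
proof -
  obtain x y a b where ab: "adjacent G a b" and u: "u = x @ a # b # y" "u' = x @ b # a # y"
    using assms by (rule swapE)
  then consider "s \<in> set x" | "s \<notin> set x" "s = a \<or> s = b" | "s \<notin> set x" "s \<noteq> a" "s \<noteq> b"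
    by blast
  then show ?thesis
  proof cases
    case 1
    then show ?thesis using ab u swapI[of G a b "remove1 s x" y] by (simp add: remove1_append)
  next
    case 2
    then show ?thesis using ab u by (auto simp: remove1_append adjacent_def)
  next
    case 3
    then show ?thesis using ab u swapI[of G a b x "remove1 s y"] by (simp add: remove1_append)
  qed
qed

lemma swap_movable_to_end:
  assumes "swap G u u'"
  shows "movable_to_end G s u \<longleftrightarrow> movable_to_end G s u'"
proof -
  obtain x y a b where ab: "adjacent G a b" and u: "u = x @ a # b # y" "u' = x @ b # a # y"
    using assms by (rule swapE)
  have "movable_to_end G s (a # b # y) \<longleftrightarrow> movable_to_end G s (b # a # y)"
    using ab adjacent_sym[OF ab] by (auto simp: adjacent_def)
  moreover have "commutes G s (a # b # y) \<longleftrightarrow> commutes G s (b # a # y)"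
    by auto
  ultimately show ?thesis using u by (simp add: movable_to_end_append)
qed

section \<open>Tits' normal form\<close>

definition right_mult :: "'a graph \<Rightarrow> 'a \<Rightarrow> 'a list \<Rightarrow> 'a list" where
  "right_mult G s u = (if movable_to_end G s u then rev (remove1 s (rev u)) else u @ [s])"

lemma right_mult_movable: "commutes G s q \<Longrightarrow> right_mult G s (p @ s # q) = p @ q"
  using commutes_not_in[of G s q] movable_to_endI[of G s q p]
  by (simp add: right_mult_def remove1_append)

lemma right_mult_movable_eq: "movable_to_end G s u \<Longrightarrow> right_mult G s u = rev (remove1 s (rev u))"
  by (simp add: right_mult_def)

lemma right_mult_not_movable: "\<not> movable_to_end G s u \<Longrightarrow> right_mult G s u = u @ [s]"
  by (simp add: right_mult_def)

lemma set_right_mult: "set (right_mult G s u) \<subseteq> insert s (set u)"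
  using set_remove1_subset[of s "rev u"] by (auto simp: right_mult_def)

lemma length_right_mult: "length (right_mult G s u) \<le> Suc (length u)"
  by (auto simp: right_mult_def length_remove1)

lemma reduced_right_mult: "reduced G u \<Longrightarrow> reduced G (right_mult G s u)"
  by (cases "movable_to_end G s u")
    (auto elim!: movable_to_endE simp: right_mult_movable right_mult_not_movable reduced_delete)

lemma right_mult_involution:
  assumes "reduced G u"
  shows "comm_equiv G (right_mult G s (right_mult G s u)) u"
proof (cases "movable_to_end G s u")
  case True
  then obtain p q where u: "u = p @ s # q" and c: "commutes G s q"
    by (rule movable_to_endE)
  have "\<not> movable_to_end G s p" using assms u reduced_prefix[of G "p @ [s]" q] by simp
  moreover have "\<not> movable_to_end G s q" using c commutes_not_in movable_to_end_in by metis
  ultimately have "right_mult G s (p @ q) = p @ q @ [s]"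
    by (simp add: right_mult_not_movable movable_to_end_append)
  moreover have "comm_equiv G (p @ q @ [s]) u"
    using u comm_equiv_sym[OF comm_equiv_move_right[OF c, of p "[]"]] by simp
  ultimately show ?thesis using u c by (simp add: right_mult_movable)
next
  case False
  then show ?thesis using right_mult_movable[of G s "[]" u] by (simp add: right_mult_not_movable)
qed

lemma movable_to_end_right_mult:
  assumes "adjacent G s t"
  shows "movable_to_end G s (right_mult G t u) \<longleftrightarrow> movable_to_end G s u"
proof (cases "movable_to_end G t u")
  case True
  then obtain p q where u: "u = p @ t # q" and "commutes G t q"
    by (rule movable_to_endE)
  then have "right_mult G t u = p @ q" by (simp add: right_mult_movable)
  moreover have "s \<noteq> t" using assms by (simp add: adjacent_def)
  ultimately show ?thesis using assms u by (simp add: movable_to_end_append)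
next
  case False
  then show ?thesis using assms by (auto simp: right_mult_not_movable adjacent_def)
qed

lemma right_mult_commute_one_movable:
  assumes st: "adjacent G s t" and s: "movable_to_end G s u" and t: "\<not> movable_to_end G t u"
  shows "right_mult G s (right_mult G t u) = right_mult G t (right_mult G s u)"
proof -
  have "s \<noteq> t" using st by (simp add: adjacent_def)
  have "movable_to_end G s (u @ [t])" using st s by simp
  then have st_u: "right_mult G s (u @ [t]) = right_mult G s u @ [t]"
    using s \<open>s \<noteq> t\<close> by (simp add: right_mult_def)
  have "\<not> movable_to_end G t (right_mult G s u)"
    using t movable_to_end_right_mult[OF adjacent_sym[OF st]] by blast
  then have ts_u: "right_mult G t (right_mult G s u) = right_mult G s u @ [t]"
    by (rule right_mult_not_movable)
  show ?thesis using t st_u ts_u by (simp add: right_mult_not_movable)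
qed

lemma right_mult_commute:
  assumes st: "adjacent G s t"
  shows "comm_equiv G (right_mult G s (right_mult G t u)) (right_mult G t (right_mult G s u))"
proof -
  have ts: "adjacent G t s" using st by (rule adjacent_sym)
  consider "movable_to_end G s u" "movable_to_end G t u"
    | "movable_to_end G s u" "\<not> movable_to_end G t u"
    | "\<not> movable_to_end G s u" "movable_to_end G t u"
    | "\<not> movable_to_end G s u" "\<not> movable_to_end G t u"
    by blast
  then show ?thesis
  proof cases
    case 1
    then have "movable_to_end G s (right_mult G t u)" "movable_to_end G t (right_mult G s u)"
      using st ts by (simp_all add: movable_to_end_right_mult)
    then have "right_mult G s (right_mult G t u) = rev (remove1 s (remove1 t (rev u)))"
      and "right_mult G t (right_mult G s u) = rev (remove1 t (remove1 s (rev u)))"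
      using 1 by (simp_all add: right_mult_movable_eq)
    then show ?thesis by (simp add: remove1_commute[of s t])
  next
    case 2
    then show ?thesis using right_mult_commute_one_movable[OF st] by simp
  next
    case 3
    then show ?thesis using right_mult_commute_one_movable[OF ts] by simp
  next
    case 4
    then have "\<not> movable_to_end G s (right_mult G t u)" "\<not> movable_to_end G t (right_mult G s u)"
      using st ts by (simp_all add: movable_to_end_right_mult)
    then have "right_mult G s (right_mult G t u) = u @ t # s # []"
      and "right_mult G t (right_mult G s u) = u @ s # t # []"
      using 4 by (simp_all add: right_mult_not_movable)
    then show ?thesis using swapI[OF ts, of u "[]"] by simp
  qed
qed

lemma right_mult_swap:
  assumes "swap G u u'"
  shows "comm_equiv G (right_mult G s u) (right_mult G s u')"
proof -
  have mov: "movable_to_end G s u \<longleftrightarrow> movable_to_end G s u'"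
    using assms by (rule swap_movable_to_end)
  show ?thesis
  proof (cases "movable_to_end G s u")
    case True
    have "swap G (rev u) (rev u')" using assms by (rule swap_rev)
    then have "remove1 s (rev u) = remove1 s (rev u') \<or>
        swap G (remove1 s (rev u)) (remove1 s (rev u'))"
      by (rule swap_remove1)
    then show ?thesis using True mov by (auto simp: right_mult_def dest: swap_rev)
  next
    case False
    then show ?thesis
      using mov comm_equiv_append[OF r_into_rtranclp[of "swap G", OF assms], of "[]" "[s]"]
      by (simp add: right_mult_not_movable)
  qed
qed

lemma right_mult_comm_equiv:
  "comm_equiv G u u' \<Longrightarrow> comm_equiv G (right_mult G s u) (right_mult G s u')"
proof (induction rule: rtranclp_induct)
  case base
  then show ?case by simp
next
  case (step u' u'')
  show ?case by (rule rtranclp_trans[OF step.IH right_mult_swap[OF step.hyps(2)]])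
qed

definition right_mult_word :: "'a graph \<Rightarrow> 'a list \<Rightarrow> 'a list \<Rightarrow> 'a list" where
  "right_mult_word G u w = foldl (\<lambda>u s. right_mult G s u) u w"

lemma right_mult_word_simps [simp]:
  "right_mult_word G u [] = u"
  "right_mult_word G u (s # w) = right_mult_word G (right_mult G s u) w"
  by (simp_all add: right_mult_word_def)

lemma right_mult_word_append:
  "right_mult_word G u (w @ w') = right_mult_word G (right_mult_word G u w) w'"
  by (simp add: right_mult_word_def)

lemma right_mult_word_comm_equiv:
  "comm_equiv G u u' \<Longrightarrow> comm_equiv G (right_mult_word G u w) (right_mult_word G u' w)"
  by (induction w arbitrary: u u') (simp_all add: right_mult_comm_equiv)

abbreviation normal_form :: "'a graph \<Rightarrow> 'a list \<Rightarrow> 'a list" where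
  "normal_form G \<equiv> right_mult_word G []"

lemma normal_form_snoc [simp]: "normal_form G (w @ [s]) = right_mult G s (normal_form G w)"
  by (simp add: right_mult_word_append)

lemma reduced_normal_form: "reduced G (normal_form G w)"
  by (induction w rule: rev_induct) (simp_all add: reduced.Nil reduced_right_mult)

lemma normal_form_reduced: "reduced G w \<Longrightarrow> normal_form G w = w"
  by (induction w rule: rev_induct) (simp_all add: right_mult_not_movable)

lemma length_normal_form: "length (normal_form G w) \<le> length w"
proof (induction w rule: rev_induct)
  case (snoc s w)
  then show ?case using length_right_mult[of G s "normal_form G w"] by simp
qed simp

lemma set_normal_form: "set (normal_form G w) \<subseteq> set w"
proof (induction w rule: rev_induct)
  case (snoc s w)
  then show ?case using set_right_mult[of G s "normal_form G w"] by auto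
qed simp

lemma normal_form_racg_eq:
  "racg_eq G w w' \<Longrightarrow> comm_equiv G (normal_form G w) (normal_form G w')"
proof (induction rule: racg_eq.induct)
  case (sym w w')
  show ?case using sym.IH by (rule comm_equiv_sym)
next
  case (trans w w' w'')
  show ?case by (rule rtranclp_trans[OF trans.IH])
next
  case (cancel xs ys v)
  have "comm_equiv G (right_mult G v (right_mult G v (normal_form G xs))) (normal_form G xs)"
    using reduced_normal_form by (rule right_mult_involution)
  then show ?case using right_mult_word_comm_equiv by (simp add: right_mult_word_append)
next
  case (commute xs ys u v)
  show ?case
  proof (cases "u = v")
    case False
    with commute.hyps(3) have "adjacent G v u" by (simp add: adjacent_def insert_commute)
    then have "comm_equiv G (right_mult G v (right_mult G u (normal_form G xs)))
        (right_mult G u (right_mult G v (normal_form G xs)))"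
      by (rule right_mult_commute)
    then show ?thesis using right_mult_word_comm_equiv by (simp add: right_mult_word_append)
  qed simp
qed simp

theorem reduced_length_le: "reduced G w \<Longrightarrow> racg_eq G w w' \<Longrightarrow> length w \<le> length w'"
  using normal_form_racg_eq[of G w w'] normal_form_reduced[of G w]
    comm_equiv_length length_normal_form[of G w'] by fastforce

section \<open>Words and the right-angled Coxeter group\<close>

lemma finite_simple_graph_edge:
  "finite_simple_graph G \<Longrightarrow> {u, v} \<in> edges G \<Longrightarrow> u \<in> verts G \<and> v \<in> verts G \<and> u \<noteq> v"
  unfolding finite_simple_graph_def by (auto simp: doubleton_eq_iff)

lemma racg_eq_set:
  "racg_eq G w w' \<Longrightarrow> finite_simple_graph G \<Longrightarrow> set w \<subseteq> verts G \<and> set w' \<subseteq> verts G"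
  by (induction rule: racg_eq.induct) (auto dest: finite_simple_graph_edge)

lemma racg_eq_append_left:
  "racg_eq G w w' \<Longrightarrow> set x \<subseteq> verts G \<Longrightarrow> racg_eq G (x @ w) (x @ w')"
proof (induction rule: racg_eq.induct)
  case (refl w)
  then show ?case by (simp add: racg_eq.refl)
next
  case (cancel xs ys v)
  then show ?case using racg_eq.cancel[of "x @ xs" G ys v] by simp
next
  case (commute xs ys u v)
  then show ?case using racg_eq.commute[of "x @ xs" G ys u v] by simp
qed (auto intro: racg_eq.sym racg_eq.trans)

lemma racg_eq_append_right:
  "racg_eq G w w' \<Longrightarrow> set y \<subseteq> verts G \<Longrightarrow> racg_eq G (w @ y) (w' @ y)"
proof (induction rule: racg_eq.induct)
  case (refl w)
  then show ?case by (simp add: racg_eq.refl)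
next
  case (cancel xs ys v)
  then show ?case using racg_eq.cancel[of xs G "ys @ y" v] by simp
next
  case (commute xs ys u v)
  then show ?case using racg_eq.commute[of xs G "ys @ y" u v] by simp
qed (auto intro: racg_eq.sym racg_eq.trans)

lemma comm_equiv_racg_eq: "comm_equiv G u u' \<Longrightarrow> set u \<subseteq> verts G \<Longrightarrow> racg_eq G u u'"
proof (induction rule: rtranclp_induct)
  case base
  then show ?case by (rule racg_eq.refl)
next
  case (step u' u'')
  from step.hyps(2) obtain x y a b
    where "adjacent G a b" "u' = x @ a # b # y" "u'' = x @ b # a # y"
    by (rule swapE)
  moreover have "set u' \<subseteq> verts G" using step comm_equiv_set by blast
  ultimately have "racg_eq G u' u''"
    using racg_eq.commute[of x G y a b] by (simp add: adjacent_def)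
  then show ?case using step by (blast intro: racg_eq.trans)
qed

lemma racg_eq_right_mult:
  assumes u: "set u \<subseteq> verts G" and s: "s \<in> verts G"
  shows "racg_eq G (u @ [s]) (right_mult G s u)"
proof (cases "movable_to_end G s u")
  case True
  then obtain p q where pq: "u = p @ s # q" "commutes G s q" by (rule movable_to_endE)
  have "racg_eq G (p @ s # q @ [s]) (p @ q @ s # [s])"
    using comm_equiv_move_right[OF pq(2), of p "[s]"] u pq(1) by (simp add: comm_equiv_racg_eq)
  moreover have "racg_eq G ((p @ q) @ [s, s] @ []) ((p @ q) @ [])"
    using u s pq(1) by (intro racg_eq.cancel) auto
  ultimately show ?thesis using pq by (simp add: right_mult_movable racg_eq.trans)
next
  case False
  then show ?thesis using u s by (simp add: right_mult_not_movable racg_eq.refl)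
qed

lemma racg_eq_normal_form: "set w \<subseteq> verts G \<Longrightarrow> racg_eq G w (normal_form G w)"
proof (induction w rule: rev_induct)
  case Nil
  then show ?case by (simp add: racg_eq.refl)
next
  case (snoc s w)
  then have "racg_eq G (w @ [s]) (normal_form G w @ [s])"
    by (simp add: racg_eq_append_right)
  moreover have "racg_eq G (normal_form G w @ [s]) (right_mult G s (normal_form G w))"
    using snoc.prems set_normal_form[of G w] by (intro racg_eq_right_mult) auto
  ultimately show ?case by (simp add: racg_eq.trans)
qed

lemma racg_eq_rev_cancel:
  "set p \<subseteq> verts G \<Longrightarrow> set r \<subseteq> verts G \<Longrightarrow> racg_eq G (rev p @ p @ r) r"
proof (induction p arbitrary: r)
  case Nil
  then show ?case by (simp add: racg_eq.refl)
next
  case (Cons a p)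
  have "racg_eq G (rev p @ [a, a] @ p @ r) (rev p @ p @ r)"
    using Cons.prems by (intro racg_eq.cancel) auto
  then show ?case using Cons by (auto intro: racg_eq.trans)
qed

lemma racg_eq_clique_square:
  assumes "distinct l" "set l \<subseteq> verts G" "pairwise (adjacent G) (set l)"
    and "set x \<subseteq> verts G" "set y \<subseteq> verts G"
  shows "racg_eq G (x @ l @ l @ y) (x @ y)"
  using assms
proof (induction l)
  case Nil
  then show ?case by (simp add: racg_eq.refl)
next
  case (Cons a l)
  then have "commutes G a l" by (auto simp: commutes_def pairwise_def)
  then have "racg_eq G (x @ a # l @ a # l @ y) (x @ l @ a # a # l @ y)"
    using comm_equiv_move_right[of G a l x "a # l @ y"] Cons.prems
    by (intro comm_equiv_racg_eq) auto
  moreover have "racg_eq G ((x @ l) @ [a, a] @ l @ y) ((x @ l) @ l @ y)"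
    using Cons.prems by (intro racg_eq.cancel) auto
  moreover have "racg_eq G (x @ l @ l @ y) (x @ y)"
    using Cons by (auto simp: pairwise_insert)
  ultimately show ?case by (auto intro: racg_eq.trans)
qed

lemma racg_class_eq: "racg_eq G a b \<Longrightarrow> racg_class G a = racg_class G b"
  unfolding racg_class_def by (blast intro: racg_eq.sym racg_eq.trans)

lemma racg_class_eq_iff:
  assumes "set a \<subseteq> verts G"
  shows "racg_class G a = racg_class G b \<longleftrightarrow> racg_eq G a b"
proof
  assume "racg_class G a = racg_class G b"
  moreover have "a \<in> racg_class G a" using assms by (simp add: racg_class_def racg_eq.refl)
  ultimately show "racg_eq G a b" by (simp add: racg_class_def racg_eq.sym)
qed (rule racg_class_eq)

lemma racg_eq_some_racg_class:
  assumes "set p \<subseteq> verts G"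
  shows "racg_eq G p (SOME x. x \<in> racg_class G p)"
proof -
  have "p \<in> racg_class G p" using assms by (simp add: racg_class_def racg_eq.refl)
  then show ?thesis unfolding racg_class_def by (metis mem_Collect_eq someI)
qed

lemma carrier_RACG_iff:
  "X \<in> carrier (RACG G) \<longleftrightarrow> (\<exists>p. set p \<subseteq> verts G \<and> X = racg_class G p)"
  unfolding RACG_def by auto

lemma mult_racg_class:
  assumes G: "finite_simple_graph G" and "set p \<subseteq> verts G" "set q \<subseteq> verts G"
  shows "racg_class G p \<otimes>\<^bsub>RACG G\<^esub> racg_class G q = racg_class G (p @ q)"
proof -
  define x where "x = (SOME x. x \<in> racg_class G p)"
  define y where "y = (SOME y. y \<in> racg_class G q)"
  have "racg_eq G p x" "racg_eq G q y"
    using assms racg_eq_some_racg_class unfolding x_def y_def by blast+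
  then have "racg_eq G (p @ q) (x @ y)"
    using assms racg_eq_set[OF \<open>racg_eq G p x\<close> G]
    by (blast intro: racg_eq.trans racg_eq_append_right racg_eq_append_left)
  then show ?thesis unfolding RACG_def x_def y_def by (simp add: racg_class_eq)
qed

lemma word_dist_reduced:
  assumes G: "finite_simple_graph G" and p: "set p \<subseteq> verts G"
    and w: "set w \<subseteq> verts G" "reduced G w" and pw: "racg_eq G (p @ w) q"
  shows "word_dist G (racg_class G p) (racg_class G q) = length w"
  unfolding word_dist_def
proof (rule Least_equality)
  show "\<exists>w'. set w' \<subseteq> verts G \<and> length w' = length w \<and>
      racg_class G p \<otimes>\<^bsub>RACG G\<^esub> racg_class G w' = racg_class G q"
    using mult_racg_class[OF G p w(1)] racg_class_eq[OF pw] w by auto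
next
  fix n
  assume "\<exists>w'. set w' \<subseteq> verts G \<and> length w' = n \<and>
      racg_class G p \<otimes>\<^bsub>RACG G\<^esub> racg_class G w' = racg_class G q"
  then obtain w' where w': "set w' \<subseteq> verts G" "length w' = n"
    "racg_class G (p @ w') = racg_class G q"
    using mult_racg_class[OF G p] by auto
  have "racg_eq G (p @ w') q" using w' p by (simp add: racg_class_eq_iff)
  then have "racg_eq G (p @ w) (p @ w')" using pw by (blast intro: racg_eq.sym racg_eq.trans)
  then have "racg_eq G (rev p @ p @ w) (rev p @ p @ w')"
    using p by (simp add: racg_eq_append_left)
  then have "racg_eq G w w'"
    using p w w' racg_eq_rev_cancel by (blast intro: racg_eq.sym racg_eq.trans)
  then show "length w \<le> n" using w(2) w'(2) reduced_length_le by blast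
qed

lemma word_dist_refl:
  "finite_simple_graph G \<Longrightarrow> set p \<subseteq> verts G \<Longrightarrow>
    word_dist G (racg_class G p) (racg_class G p) = 0"
  using word_dist_reduced[of G p "[]" p] by (simp add: reduced.Nil racg_eq.refl)

lemma racg_eq_normal_form_quotient:
  assumes "set p \<subseteq> verts G" "set q \<subseteq> verts G"
  shows "racg_eq G (p @ normal_form G (rev p @ q)) q"
proof -
  have "racg_eq G (p @ normal_form G (rev p @ q)) (p @ rev p @ q)"
    using assms racg_eq_normal_form[of "rev p @ q" G]
    by (simp add: racg_eq_append_left racg_eq.sym)
  moreover have "racg_eq G (rev (rev p) @ rev p @ q) q"
    using assms by (intro racg_eq_rev_cancel) auto
  ultimately show ?thesis by (auto intro: racg_eq.trans)
qed

section \<open>Substituting fibres\<close>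

lemma verts_complement_graph [simp]: "verts (complement_graph X) = verts X"
  by (simp add: complement_graph_def verts_def)

lemma edges_complement_graph:
  "edges (complement_graph X) =
    {{u, v} | u v. u \<in> verts X \<and> v \<in> verts X \<and> u \<noteq> v \<and> {u, v} \<notin> edges X}"
  by (simp add: complement_graph_def edges_def verts_def)

lemma edge_complement_graph_iff:
  "{a, b} \<in> edges (complement_graph X) \<longleftrightarrow>
    a \<in> verts X \<and> b \<in> verts X \<and> a \<noteq> b \<and> {a, b} \<notin> edges X"
  unfolding edges_complement_graph by (auto simp: doubleton_eq_iff insert_commute)

locale locally_surjective_complement_map =
  fixes L :: "'a graph" and G :: "'b graph" and g :: "'a \<Rightarrow> 'b"
  assumes simple_L: "finite_simple_graph L" and simple_G: "finite_simple_graph G"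
    and morphism: "graph_morphism g (complement_graph L) (complement_graph G)"
    and surj: "g ` verts L = verts G"
    and locally_surj: "locally_surjective g (complement_graph L) (complement_graph G)"
begin

lemma complement_edge_image:
  "{a, b} \<in> edges (complement_graph L) \<Longrightarrow> {g a, g b} \<in> edges (complement_graph G)"
  using morphism unfolding graph_morphism_def by force

lemma fibre_adjacent:
  assumes "a \<in> verts L" "b \<in> verts L" "g a = g b" "a \<noteq> b"
  shows "adjacent L a b"
proof (rule ccontr)
  assume "\<not> adjacent L a b"
  then have "{a, b} \<in> edges (complement_graph L)"
    using assms by (simp add: edge_complement_graph_iff adjacent_def)
  then have "{g a, g a} \<in> edges (complement_graph G)"
    using complement_edge_image assms(3) by metis
  then show False by (simp only: edge_complement_graph_iff) simp
qed

lemma fibres_adjacent: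
  assumes "{g a, g b} \<in> edges G" "a \<in> verts L" "b \<in> verts L"
  shows "adjacent L a b"
proof (rule ccontr)
  assume "\<not> adjacent L a b"
  moreover have "a \<noteq> b" using finite_simple_graph_edge[OF simple_G assms(1)] by auto
  ultimately have "{a, b} \<in> edges (complement_graph L)"
    using assms by (simp add: edge_complement_graph_iff adjacent_def)
  then have "{g a, g b} \<notin> edges G"
    using complement_edge_image by (simp add: edge_complement_graph_iff)
  then show False using assms(1) by contradiction
qed

lemma nonadjacent_preimage:
  assumes a: "a \<in> verts L" and v: "v \<in> verts G" "v \<noteq> g a" "\<not> adjacent G (g a) v"
  shows "\<exists>c \<in> verts L. g c = v \<and> \<not> adjacent L a c"
proof -
  have "g a \<in> verts G" using surj a by auto
  then have "{g a, v} \<in> edges (complement_graph G)"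
    using v by (auto simp: edge_complement_graph_iff adjacent_def)
  then obtain e where e: "e \<in> edges (complement_graph L)" "a \<in> e" "g ` e = {g a, v}"
    using locally_surj a unfolding locally_surjective_def by fastforce
  then obtain c where c: "e = {a, c}"
    unfolding edges_complement_graph by (auto simp: insert_commute)
  then have "c \<in> verts L" "\<not> adjacent L a c"
    using e(1) by (auto simp: edge_complement_graph_iff adjacent_def)
  moreover have "g c = v" using e(3) c v(2) by (auto simp: doubleton_eq_iff)
  ultimately show ?thesis by blast
qed

(* Any enumeration of the fibre will do: the fibre is a clique, so all orders give the same
   element of C(Lambda). *)
definition fibre_word :: "'b \<Rightarrow> 'a list" where
  "fibre_word v = (SOME l. distinct l \<and> set l = {a \<in> verts L. g a = v})"

lemma fibre_word: "distinct (fibre_word v) \<and> set (fibre_word v) = {a \<in> verts L. g a = v}"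
proof -
  have "finite {a \<in> verts L. g a = v}" using simple_L by (simp add: finite_simple_graph_def)
  then obtain l where "distinct l \<and> set l = {a \<in> verts L. g a = v}"
    using finite_distinct_list by metis
  then show ?thesis unfolding fibre_word_def by (rule someI)
qed

lemma in_fibre_word_iff: "a \<in> set (fibre_word v) \<longleftrightarrow> a \<in> verts L \<and> g a = v"
  using fibre_word by simp

definition subst_word :: "'b list \<Rightarrow> 'a list" where
  "subst_word w = concat (map fibre_word w)"

lemma subst_word_simps [simp]:
  "subst_word [] = []"
  "subst_word (v # w) = fibre_word v @ subst_word w"
  "subst_word (w @ w') = subst_word w @ subst_word w'"
  by (simp_all add: subst_word_def)

lemma set_subst_word: "set (subst_word w) \<subseteq> verts L"
  by (induction w) (auto simp: in_fibre_word_iff)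

lemma racg_eq_subst_word: "racg_eq G w w' \<Longrightarrow> racg_eq L (subst_word w) (subst_word w')"
proof (induction rule: racg_eq.induct)
  case (refl w)
  show ?case using set_subst_word by (rule racg_eq.refl)
next
  case (cancel xs ys v)
  have "pairwise (adjacent L) (set (fibre_word v))"
    by (auto simp: pairwise_def in_fibre_word_iff intro: fibre_adjacent)
  then show ?case
    using fibre_word set_subst_word by (simp add: racg_eq_clique_square)
next
  case (commute xs ys u v)
  have "\<forall>a \<in> set (fibre_word u). \<forall>b \<in> set (fibre_word v). adjacent L a b"
    using commute.hyps(3) by (auto simp: in_fibre_word_iff intro: fibres_adjacent)
  then have "comm_equiv L (subst_word xs @ fibre_word u @ fibre_word v @ subst_word ys)
      (subst_word xs @ fibre_word v @ fibre_word u @ subst_word ys)"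
    by (rule comm_equiv_swap_blocks)
  then show ?case
    using set_subst_word[of "xs @ [u, v] @ ys"] by (simp add: comm_equiv_racg_eq)
qed (auto intro: racg_eq.sym racg_eq.trans)

lemma movable_to_end_subst_word:
  assumes "set w \<subseteq> verts G" "a \<in> verts L" "movable_to_end L a (subst_word w)"
  shows "movable_to_end G (g a) w"
  using assms
proof (induction w rule: rev_induct)
  case (snoc u w)
  then have "movable_to_end L a (fibre_word u) \<or>
      commutes L a (fibre_word u) \<and> movable_to_end L a (subst_word w)"
    by (simp add: movable_to_end_append)
  then show ?case
  proof
    assume "movable_to_end L a (fibre_word u)"
    then have "g a = u" using movable_to_end_in in_fibre_word_iff by metis
    then show ?thesis by simp
  next
    assume a: "commutes L a (fibre_word u) \<and> movable_to_end L a (subst_word w)"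
    have "adjacent G (g a) u" if ne: "u \<noteq> g a"
    proof (rule ccontr)
      assume "\<not> adjacent G (g a) u"
      then obtain c where "c \<in> verts L" "g c = u" "\<not> adjacent L a c"
        using nonadjacent_preimage[of a u] snoc.prems ne by auto
      then show False using a by (auto simp: commutes_def in_fibre_word_iff)
    qed
    then show ?thesis using a snoc by auto
  qed
qed simp

lemma reduced_subst_word: "set w \<subseteq> verts G \<Longrightarrow> reduced G w \<Longrightarrow> reduced L (subst_word w)"
proof (induction w rule: rev_induct)
  case (snoc v w)
  then have "reduced L (subst_word w)" "\<not> movable_to_end G v w" by auto
  moreover have "\<not> movable_to_end L a (subst_word w)" if "a \<in> set (fibre_word v)" for a
    using that snoc.prems \<open>\<not> movable_to_end G v w\<close> movable_to_end_subst_word[of w a]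
    by (auto simp: in_fibre_word_iff)
  ultimately have "reduced L (subst_word w @ fibre_word v)"
    by (intro reduced_append_distinct) (use fibre_word in auto)
  then show ?case by simp
qed (simp add: reduced.Nil)

lemma length_le_length_subst_word: "set w \<subseteq> verts G \<Longrightarrow> length w \<le> length (subst_word w)"
proof (induction w)
  case (Cons v w)
  then have "v \<in> g ` verts L" using surj by simp
  then obtain a where "a \<in> verts L" "g a = v" by blast
  then have "a \<in> set (fibre_word v)" by (simp add: in_fibre_word_iff)
  then have "length (fibre_word v) \<ge> 1" by (cases "fibre_word v") auto
  then show ?case using Cons by simp
qed simp

lemma length_subst_word_le: "length (subst_word w) \<le> card (verts L) * length w"
proof (induction w)
  case (Cons v w)
  have "length (fibre_word v) = card {a \<in> verts L. g a = v}"
    using fibre_word distinct_card by metis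
  also have "\<dots> \<le> card (verts L)"
    using simple_L by (intro card_mono) (auto simp: finite_simple_graph_def)
  finally show ?case using Cons by simp
qed simp

definition subst_hom :: "'b list set \<Rightarrow> 'a list set" where
  "subst_hom X = racg_class L (subst_word (SOME w. w \<in> X))"

lemma subst_hom_racg_class:
  "set p \<subseteq> verts G \<Longrightarrow> subst_hom (racg_class G p) = racg_class L (subst_word p)"
  unfolding subst_hom_def
  by (metis racg_class_eq racg_eq_some_racg_class racg_eq_subst_word)

lemma subst_hom_hom: "subst_hom \<in> hom (RACG G) (RACG L)"
proof (rule homI)
  fix X assume "X \<in> carrier (RACG G)"
  then show "subst_hom X \<in> carrier (RACG L)"
    using set_subst_word by (fastforce simp: carrier_RACG_iff subst_hom_racg_class)
next
  fix X Y assume "X \<in> carrier (RACG G)" "Y \<in> carrier (RACG G)"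
  then obtain p q where "set p \<subseteq> verts G" "X = racg_class G p" "set q \<subseteq> verts G" "Y = racg_class G q"
    by (auto simp: carrier_RACG_iff)
  then show "subst_hom (X \<otimes>\<^bsub>RACG G\<^esub> Y) = subst_hom X \<otimes>\<^bsub>RACG L\<^esub> subst_hom Y"
    using mult_racg_class[OF simple_G] mult_racg_class[OF simple_L] set_subst_word
    by (simp add: subst_hom_racg_class)
qed

lemma word_dist_subst_hom:
  assumes p: "set p \<subseteq> verts G" and q: "set q \<subseteq> verts G"
  defines "w \<equiv> normal_form G (rev p @ q)"
  shows "word_dist G (racg_class G p) (racg_class G q) = length w"
    and "word_dist L (subst_hom (racg_class G p)) (subst_hom (racg_class G q)) =
      length (subst_word w)"
proof -
  have w: "set w \<subseteq> verts G" "reduced G w" "racg_eq G (p @ w) q"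
    using set_normal_form[of G "rev p @ q"] p q reduced_normal_form[of G]
      racg_eq_normal_form_quotient[OF p q]
    unfolding w_def by auto
  then show "word_dist G (racg_class G p) (racg_class G q) = length w"
    using p by (intro word_dist_reduced[OF simple_G])
  have "racg_eq L (subst_word p @ subst_word w) (subst_word q)"
    using racg_eq_subst_word[OF w(3)] by simp
  then show "word_dist L (subst_hom (racg_class G p)) (subst_hom (racg_class G q)) =
      length (subst_word w)"
    using p q w set_subst_word reduced_subst_word
    by (simp add: subst_hom_racg_class word_dist_reduced[OF simple_L])
qed

lemma inj_on_subst_hom: "inj_on subst_hom (carrier (RACG G))"
proof (rule inj_onI)
  fix X Y
  assume "X \<in> carrier (RACG G)" "Y \<in> carrier (RACG G)" and eq: "subst_hom X = subst_hom Y"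
  then obtain p q where p: "set p \<subseteq> verts G" "X = racg_class G p"
    and q: "set q \<subseteq> verts G" "Y = racg_class G q"
    by (auto simp: carrier_RACG_iff)
  define w where "w = normal_form G (rev p @ q)"
  have "word_dist L (subst_hom X) (subst_hom Y) = 0"
    using word_dist_refl[OF simple_L set_subst_word, of p] p eq by (simp add: subst_hom_racg_class)
  then have "length (subst_word w) = 0"
    using word_dist_subst_hom(2)[OF p(1) q(1)] p(2) q(2) unfolding w_def by simp
  moreover have "set w \<subseteq> verts G"
    using set_normal_form[of G "rev p @ q"] p q unfolding w_def by auto
  ultimately have "w = []" using length_le_length_subst_word[of w] by simp
  then have "racg_eq G p q"
    using racg_eq_normal_form_quotient[OF p(1) q(1)] unfolding w_def by simp
  then show "X = Y" using p q by (simp add: racg_class_eq)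
qed

lemma qi_embedding_subst_hom: "qi_embedding G L subst_hom"
  unfolding qi_embedding_def
proof (intro exI conjI ballI)
  define K where "K = real (card (verts L)) + 1"
  show "K \<ge> 1" "(0::real) \<le> 0" by (simp_all add: K_def)
  fix X Y assume "X \<in> carrier (RACG G)" "Y \<in> carrier (RACG G)"
  then obtain p q where p: "set p \<subseteq> verts G" "X = racg_class G p"
    and q: "set q \<subseteq> verts G" "Y = racg_class G q"
    by (auto simp: carrier_RACG_iff)
  define w where "w = normal_form G (rev p @ q)"
  have "set w \<subseteq> verts G"
    using set_normal_form[of G "rev p @ q"] p q unfolding w_def by auto
  then have lower: "real (length w) \<le> real (length (subst_word w))"
    and upper: "real (length (subst_word w)) \<le> real (card (verts L)) * real (length w)"
    using length_le_length_subst_word length_subst_word_le[of w] of_nat_mono by fastforce+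
  have "real (length w) / K \<le> real (length w)" by (simp add: K_def field_simps)
  then show "real (word_dist G X Y) / K - 0 \<le> real (word_dist L (subst_hom X) (subst_hom Y))"
    using word_dist_subst_hom[OF p(1) q(1)] lower p(2) q(2) by (simp add: w_def)
  have "real (length (subst_word w)) \<le> K * real (length w)"
    using upper by (simp add: K_def algebra_simps)
  then show "real (word_dist L (subst_hom X) (subst_hom Y)) \<le> K * real (word_dist G X Y) + 0"
    using word_dist_subst_hom[OF p(1) q(1)] p(2) q(2) by (simp add: w_def)
qed

end

theorem corollary6p3:
  fixes Lambda :: "'a graph" and Gamma :: "'b graph" and g :: "'a \<Rightarrow> 'b"
  assumes "finite_simple_graph Lambda" and "finite_simple_graph Gamma"
    and "graph_morphism g (complement_graph Lambda) (complement_graph Gamma)"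
    and "g ` verts Lambda = verts Gamma"
    and "locally_surjective g (complement_graph Lambda) (complement_graph Gamma)"
  shows "\<exists>f. f \<in> hom (RACG Gamma) (RACG Lambda) \<and> inj_on f (carrier (RACG Gamma))
             \<and> qi_embedding Gamma Lambda f"
proof -
  interpret locally_surjective_complement_map Lambda Gamma g
    using assms by unfold_locales
  show ?thesis using subst_hom_hom inj_on_subst_hom qi_embedding_subst_hom by blast
qed

end
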